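(* Let $q\in\mathbb C\setminus\{0\}$, let $\tau$ be a decorated ideal triangulation of $S$ with underlying ideal triangulation $\lambda$. The assignment $F_\tau(X_i)=q^{\delta_{\mu\nu}\sigma_{ts}}H^s_\mu H^t_\nu$, whenever the edge $\lambda_i$ bounds the $s$-side of $\tau_\mu$ and the $t$-side of $\tau_\nu$ (with $\delta$ the Kronecker delta), extends to an algebra homomorphism $F_\tau:\mathcal T^q_\lambda\to\mathcal K^q_\tau$.
   Context: Let $\bar S$ be a closed oriented surface of genus $g$, $S=\bar S\setminus\{v_1,\dots,v_p\}$, $p\ge1$, $m=2g-2+p>0$. A decorated ideal triangulation $\tau$ is an ideal triangulation $\lambda$ of $S$ (triangulation of $\bar S$ with vertex set exactly $\{v_1,\dots,v_p\}$; two sides of a triangle may lie on the same edge), with edges indexed $\lambda_1,\dots,\lambda_{3m}$, whose $2m$ triangles are numbered $\tau_1,\dots,\tau_{2m}$ and each has one marked corner. The sides of each triangle are numbered $0,1,2$ in counterclockwise order, the $0$-side being opposite the marked corner. The Kashaev algebra $\mathcal K^q_\tau$ is generated by $Y_\mu^{\pm1},Z_\mu^{\pm1}$ with relations $Y_\mu Y_\nu=Y_\nu Y_\mu$, $Z_\mu Z_\nu=Z_\nu Z_\mu$, $Y_\mu Z_\nu=Z_\nu Y_\mu$ ($\mu\ne\nu$), $Z_\mu Y_\mu=q^2Y_\mu Z_\mu$; set $H^0_\mu=Y_\mu Z_\mu^{-1}$, $H^1_\mu=Z_\mu$, $H^2_\mu=Y_\mu^{-1}$, and $\sigma_{st}$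 ($s,t\in\{0,1,2\}$) antisymmetric with $\sigma_{10}=\sigma_{02}=\sigma_{21}=1$ (when $\mu=\nu$ the formula for $F_\tau(X_i)$ does not depend on which side is called $s$). The Chekhov–Fock algebra $\mathcal T^q_\lambda$ is generated by $X_1^{\pm1},\dots,X_{3m}^{\pm1}$ with relations $X_iX_j=q^{2\sigma^\lambda_{ij}}X_jX_i$, where $\sigma^\lambda_{ij}=a^\lambda_{ij}-a^\lambda_{ji}$ and $a^\lambda_{ij}$ is the number of corners of triangles of $\lambda$ delimited on the left by $\lambda_i$ and on the right by $\lambda_j$; here a corner lying between two sides of a triangle that are consecutive in the counterclockwise order of its sides is regarded as delimited on the right by the earlier side and on the left by the later side (equivalently, each triangle whose $0,1,2$-sides lie on $\lambda_a,\lambda_b,\lambda_c$ contributes $\sigma_{st}$ to $\sigma^\lambda$ for the pair of edges on its $s$- and $t$-sides). *)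

theory Defs
  imports Complex_Main "HOL-Algebra.Ring"
begin

text \<open>Exponent vectors are functions nat => int; an element of the quantum torus with
generators X_0,...,X_{N-1} and relations X_i X_j = q^(2 eps i j) X_j X_i is a finitely
supported complex-valued function on exponent vectors supported in {..<N}.  The monomial
with exponent a stands for the ordered product X_0^(a 0) ... X_(N-1)^(a (N-1)).\<close>

definition qt_carrier :: "nat \<Rightarrow> ((nat \<Rightarrow> int) \<Rightarrow> complex) set" where
  "qt_carrier N = {f. finite {a. f a \<noteq> 0} \<and> (\<forall>a. f a \<noteq> 0 \<longrightarrow> (\<forall>i\<ge>N. a i = 0))}"

text \<open>Cocycle: moving X_j^(b j) to the left past X_i^(a i) for i > j.\<close>
definition qt_coc :: "nat \<Rightarrow> (nat \<Rightarrow> nat \<Rightarrow> int) \<Rightarrow> (nat \<Rightarrow> int) \<Rightarrow> (nat \<Rightarrow> int) \<Rightarrow> int" where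
  "qt_coc N eps a b = (\<Sum>i<N. \<Sum>j<i. 2 * eps i j * a i * b j)"

definition qt_mult :: "nat \<Rightarrow> (nat \<Rightarrow> nat \<Rightarrow> int) \<Rightarrow> complex \<Rightarrow>
    ((nat \<Rightarrow> int) \<Rightarrow> complex) \<Rightarrow> ((nat \<Rightarrow> int) \<Rightarrow> complex) \<Rightarrow> ((nat \<Rightarrow> int) \<Rightarrow> complex)" where
  "qt_mult N eps q f g = (\<lambda>a. \<Sum>(b, c) \<in> {(b, c). f b \<noteq> 0 \<and> g c \<noteq> 0 \<and> (\<lambda>k. b k + c k) = a}.
      q powi (qt_coc N eps b c) * f b * g c)"

definition qt_mono :: "(nat \<Rightarrow> int) \<Rightarrow> ((nat \<Rightarrow> int) \<Rightarrow> complex)" where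
  "qt_mono a = (\<lambda>b. if b = a then 1 else 0)"

definition qt_smult :: "complex \<Rightarrow> ((nat \<Rightarrow> int) \<Rightarrow> complex) \<Rightarrow> ((nat \<Rightarrow> int) \<Rightarrow> complex)" where
  "qt_smult c f = (\<lambda>a. c * f a)"

definition qtorus :: "nat \<Rightarrow> (nat \<Rightarrow> nat \<Rightarrow> int) \<Rightarrow> complex \<Rightarrow> ((nat \<Rightarrow> int) \<Rightarrow> complex) ring" where
  "qtorus N eps q = \<lparr> carrier = qt_carrier N, mult = qt_mult N eps q, one = qt_mono (\<lambda>_. 0),
      zero = (\<lambda>_. 0), add = (\<lambda>f g a. f a + g a) \<rparr>"

definition qt_gen :: "nat \<Rightarrow> int \<Rightarrow> ((nat \<Rightarrow> int) \<Rightarrow> complex)" where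
  "qt_gen i k = qt_mono (\<lambda>j. if j = i then k else 0)"

definition alg_hom where
  "alg_hom R S = {F. F \<in> ring_hom R S \<and> (\<forall>c. \<forall>x\<in>carrier R. F (qt_smult c x) = qt_smult c (F x))}"

text \<open>Indices are 0-based: triangles tau_0..tau_(2m-1), edges lambda_0..lambda_(3m-1).
side mu s is the index of the edge on which the s-side of triangle mu lies (s = 0,1,2,
counterclockwise, 0-side opposite the marked corner).\<close>

definition decorated_ideal_triangulation :: "nat \<Rightarrow> (nat \<Rightarrow> nat \<Rightarrow> nat) \<Rightarrow> bool" where
  "decorated_ideal_triangulation m side \<longleftrightarrow>
     0 < m \<and>
     (\<forall>mu<2*m. \<forall>s<3. side mu s < 3*m) \<and>
     (\<forall>i<3*m. card {(mu, s). mu < 2*m \<and> s < 3 \<and> side mu s = i} = 2) \<and>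
     (\<forall>mu<2*m. \<forall>nu<2*m. (mu, nu) \<in>
        {(a, b). a < 2*m \<and> b < 2*m \<and> (\<exists>s<3. \<exists>t<3. side a s = side b t)}\<^sup>*)"

text \<open>a^lambda_ij: number of corners delimited on the left by lambda_i and on the right by
lambda_j; the corner between sides s and (s+1) mod 3 has right side s, left side (s+1) mod 3.\<close>
definition corner_count :: "nat \<Rightarrow> (nat \<Rightarrow> nat \<Rightarrow> nat) \<Rightarrow> nat \<Rightarrow> nat \<Rightarrow> int" where
  "corner_count m side i j =
     int (card {(mu, s). mu < 2*m \<and> s < 3 \<and> side mu ((s + 1) mod 3) = i \<and> side mu s = j})"

definition sigma_lambda :: "nat \<Rightarrow> (nat \<Rightarrow> nat \<Rightarrow> nat) \<Rightarrow> nat \<Rightarrow> nat \<Rightarrow> int" where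
  "sigma_lambda m side i j = corner_count m side i j - corner_count m side j i"

definition sig :: "nat \<Rightarrow> nat \<Rightarrow> int" where
  "sig s t = (if (s, t) \<in> {(1,0), (0,2), (2,1)} then 1
              else if (t, s) \<in> {(1,0), (0,2), (2,1)} then -1 else 0)"

definition chekhov_fock :: "nat \<Rightarrow> (nat \<Rightarrow> nat \<Rightarrow> nat) \<Rightarrow> complex \<Rightarrow> ((nat \<Rightarrow> int) \<Rightarrow> complex) ring" where
  "chekhov_fock m side q = qtorus (3*m) (sigma_lambda m side) q"

text \<open>Kashaev algebra K^q_tau: Y_mu is generator 2 mu, Z_mu is generator 2 mu + 1;
the only nontrivial relation is Z_mu Y_mu = q^2 Y_mu Z_mu.\<close>
definition kashaev_eps :: "nat \<Rightarrow> nat \<Rightarrow> int" where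
  "kashaev_eps i j = (if even j \<and> i = j + 1 then 1 else if even i \<and> j = i + 1 then -1 else 0)"

definition kashaev :: "nat \<Rightarrow> complex \<Rightarrow> ((nat \<Rightarrow> int) \<Rightarrow> complex) ring" where
  "kashaev m q = qtorus (4*m) kashaev_eps q"

definition Yg :: "nat \<Rightarrow> int \<Rightarrow> ((nat \<Rightarrow> int) \<Rightarrow> complex)" where
  "Yg mu k = qt_gen (2*mu) k"

definition Zg :: "nat \<Rightarrow> int \<Rightarrow> ((nat \<Rightarrow> int) \<Rightarrow> complex)" where
  "Zg mu k = qt_gen (2*mu + 1) k"

definition Hg :: "nat \<Rightarrow> complex \<Rightarrow> nat \<Rightarrow> nat \<Rightarrow> ((nat \<Rightarrow> int) \<Rightarrow> complex)" where
  "Hg m q s mu = (if s = 0 then Yg mu 1 \<otimes>\<^bsub>kashaev m q\<^esub> Zg mu (-1)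
                  else if s = 1 then Zg mu 1 else Yg mu (-1))"

end

theory Submission
  imports Defs
begin

text \<open>Write \<open>X^a\<close> for the ordered monomial \<open>qt_mono a\<close> and \<open>W(a) = q^h(a) X^a\<close> for its Weyl
  normalisation, \<open>h = qt_weyl_exp\<close>. Then \<open>W(a) W(b) = q^\<omega>(a,b) W(a+b)\<close>, where \<open>\<omega> = qt_form\<close> is
  the bilinear form of the commutation matrix. Hence an integer matrix \<open>V\<close> whose rows satisfy
  \<open>\<omega>'(V i, V j) = \<omega>(e i, e j)\<close> induces an algebra homomorphism \<open>W(a) \<mapsto> q^\<langle>a,\<lambda>\<rangle> W(V a)\<close> of
  quantum tori, for any twist \<open>\<lambda>\<close>. Each \<open>H^s_\<mu>\<close> is a monomial of the Kashaev algebra, and its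
  exponent vector \<open>h^s_\<mu>\<close> satisfies \<open>\<omega>(h^s_\<mu>, h^t_\<nu>) = \<delta>_\<mu>\<nu> \<sigma>_st\<close>. Taking for \<open>V i\<close> the sum of
  \<open>h^s_\<mu>\<close> over the two sides \<open>(\<mu>, s)\<close> lying on \<open>\<lambda>_i\<close>, compatibility becomes the corner count
  defining \<open>\<sigma>^\<lambda>\<close>, and the twist cancelling the Weyl normalisations of the two factors gives
  exactly \<open>F(X_i) = q^(\<delta>_\<mu>\<nu> \<sigma>_ts) H^s_\<mu> H^t_\<nu>\<close>.\<close>

definition qt_weyl_exp :: "nat \<Rightarrow> (nat \<Rightarrow> nat \<Rightarrow> int) \<Rightarrow> (nat \<Rightarrow> int) \<Rightarrow> int" where
  "qt_weyl_exp N e a = (\<Sum>i<N. \<Sum>j<i. e i j * a i * a j)"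

definition qt_form :: "nat \<Rightarrow> (nat \<Rightarrow> nat \<Rightarrow> int) \<Rightarrow> (nat \<Rightarrow> int) \<Rightarrow> (nat \<Rightarrow> int) \<Rightarrow> int" where
  "qt_form N e a b = (\<Sum>i<N. \<Sum>j<N. e i j * a i * b j)"

definition qt_exp_map :: "nat \<Rightarrow> (nat \<Rightarrow> nat \<Rightarrow> int) \<Rightarrow> (nat \<Rightarrow> int) \<Rightarrow> (nat \<Rightarrow> int)" where
  "qt_exp_map N V a = (\<lambda>k. \<Sum>i<N. a i * V i k)"

lemma qt_coc_diag: "qt_coc N e a a = 2 * qt_weyl_exp N e a"
  by (simp add: qt_coc_def qt_weyl_exp_def sum_distrib_left mult.assoc)

lemma qt_coc_add_left: "qt_coc N e (\<lambda>k. x k + y k) z = qt_coc N e x z + qt_coc N e y z"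
  by (simp add: qt_coc_def algebra_simps sum.distrib)

lemma qt_coc_add_right: "qt_coc N e z (\<lambda>k. x k + y k) = qt_coc N e z x + qt_coc N e z y"
  by (simp add: qt_coc_def algebra_simps sum.distrib)

lemma qt_coc_antisym:
  assumes "\<And>i j. e i j = - e j i"
  shows "qt_coc N e x y - qt_coc N e y x = 2 * qt_form N e x y"
proof (induction N)
  case 0
  then show ?case by (simp add: qt_coc_def qt_form_def)
next
  case (Suc N)
  have diag: "e N N = 0" using assms[of N N] by simp
  define D where "D = (\<Sum>j<N. e N j * x N * y j)"
  define E where "E = (\<Sum>i<N. e i N * x i * y N)"
  have "qt_coc (Suc N) e x y = qt_coc N e x y + 2 * D"
    by (simp add: qt_coc_def D_def sum_distrib_left algebra_simps)
  moreover have "qt_coc (Suc N) e y x = qt_coc N e y x - 2 * E"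
    by (simp add: qt_coc_def E_def sum_distrib_left algebra_simps assms[of N] sum_negf)
  moreover have "qt_form (Suc N) e x y = qt_form N e x y + D + E"
    by (simp add: qt_form_def sum.distrib diag D_def E_def algebra_simps)
  ultimately show ?case using Suc by simp
qed

lemma qt_weyl_exp_add:
  assumes "\<And>i j. e i j = - e j i"
  shows "qt_weyl_exp N e (\<lambda>k. x k + y k)
    = qt_weyl_exp N e x + qt_weyl_exp N e y + qt_coc N e x y - qt_form N e x y"
proof -
  have "2 * qt_weyl_exp N e (\<lambda>k. x k + y k)
      = 2 * qt_weyl_exp N e x + 2 * qt_weyl_exp N e y + qt_coc N e x y + qt_coc N e y x"
    by (simp add: qt_coc_diag[symmetric] qt_coc_add_left qt_coc_add_right)
  then show ?thesis using qt_coc_antisym[where N=N and e=e and x=x and y=y, OF assms] by linarith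
qed

lemma mult_sum_sum:
  "(c::'a::comm_semiring_0) * (\<Sum>i\<in>A. f i) * (\<Sum>j\<in>B. g j) = (\<Sum>i\<in>A. \<Sum>j\<in>B. c * f i * g j)"
  by (subst mult.assoc, subst sum_product, simp add: sum_distrib_left mult.assoc)

lemma sum_swap_pairs:
  "(\<Sum>k\<in>K. \<Sum>l\<in>L. \<Sum>i\<in>I. \<Sum>j\<in>J. F k l i j) = (\<Sum>i\<in>I. \<Sum>j\<in>J. \<Sum>k\<in>K. \<Sum>l\<in>L. F k l i j)"
proof -
  have "(\<Sum>k\<in>K. \<Sum>l\<in>L. \<Sum>i\<in>I. \<Sum>j\<in>J. F k l i j) = (\<Sum>k\<in>K. \<Sum>i\<in>I. \<Sum>l\<in>L. \<Sum>j\<in>J. F k l i j)"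
    by (rule sum.cong[OF refl], rule sum.swap)
  also have "\<dots> = (\<Sum>i\<in>I. \<Sum>k\<in>K. \<Sum>l\<in>L. \<Sum>j\<in>J. F k l i j)"
    by (rule sum.swap)
  also have "\<dots> = (\<Sum>i\<in>I. \<Sum>k\<in>K. \<Sum>j\<in>J. \<Sum>l\<in>L. F k l i j)"
    by (rule sum.cong[OF refl], rule sum.cong[OF refl], rule sum.swap)
  also have "\<dots> = (\<Sum>i\<in>I. \<Sum>j\<in>J. \<Sum>k\<in>K. \<Sum>l\<in>L. F k l i j)"
    by (rule sum.cong[OF refl], rule sum.swap)
  finally show ?thesis .
qed

lemma qt_form_sum:
  "qt_form N e (\<lambda>k. \<Sum>p\<in>P. x p k) (\<lambda>k. \<Sum>p'\<in>P'. y p' k)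
    = (\<Sum>p\<in>P. \<Sum>p'\<in>P'. qt_form N e (x p) (y p'))"
proof -
  have "qt_form N e (\<lambda>k. \<Sum>p\<in>P. x p k) (\<lambda>k. \<Sum>p'\<in>P'. y p' k)
      = (\<Sum>k<N. \<Sum>l<N. \<Sum>p\<in>P. \<Sum>p'\<in>P'. e k l * x p k * y p' l)"
    unfolding qt_form_def by (intro sum.cong refl) (rule mult_sum_sum)
  also have "\<dots> = (\<Sum>p\<in>P. \<Sum>p'\<in>P'. \<Sum>k<N. \<Sum>l<N. e k l * x p k * y p' l)"
    by (rule sum_swap_pairs)
  finally show ?thesis unfolding qt_form_def .
qed

lemma qt_form_exp_map:
  assumes "\<And>i j. i < N \<Longrightarrow> j < N \<Longrightarrow> qt_form M e' (V i) (V j) = e i j"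
  shows "qt_form M e' (qt_exp_map N V b) (qt_exp_map N V c) = qt_form N e b c"
proof -
  have "qt_form M e' (qt_exp_map N V b) (qt_exp_map N V c)
      = (\<Sum>i<N. \<Sum>j<N. qt_form M e' (\<lambda>k. b i * V i k) (\<lambda>k. c j * V j k))"
    unfolding qt_exp_map_def by (rule qt_form_sum)
  also have "\<dots> = (\<Sum>i<N. \<Sum>j<N. e i j * b i * c j)"
    by (intro sum.cong refl)
       (simp add: assms[symmetric] qt_form_def sum_distrib_left algebra_simps)
  finally show ?thesis unfolding qt_form_def .
qed

lemma qt_exp_map_add:
  "qt_exp_map N V (\<lambda>k. b k + c k) = (\<lambda>k. qt_exp_map N V b k + qt_exp_map N V c k)"
  by (simp add: qt_exp_map_def algebra_simps sum.distrib)

text \<open>\<open>W(a) \<mapsto> q^\<langle>a,\<lambda>\<rangle> W(V a)\<close> rewritten for ordered monomials: \<open>X^a \<mapsto> q^\<gamma>(a) X^(V a)\<close>.\<close>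
definition qt_twist_exp :: "nat \<Rightarrow> (nat \<Rightarrow> nat \<Rightarrow> int) \<Rightarrow> nat \<Rightarrow> (nat \<Rightarrow> nat \<Rightarrow> int)
    \<Rightarrow> (nat \<Rightarrow> nat \<Rightarrow> int) \<Rightarrow> (nat \<Rightarrow> int) \<Rightarrow> (nat \<Rightarrow> int) \<Rightarrow> int" where
  "qt_twist_exp N e M e' V lam a =
     qt_weyl_exp M e' (qt_exp_map N V a) - qt_weyl_exp N e a + (\<Sum>i<N. a i * lam i)"

definition qt_monomial_map :: "nat \<Rightarrow> (nat \<Rightarrow> nat \<Rightarrow> int) \<Rightarrow> nat \<Rightarrow> (nat \<Rightarrow> nat \<Rightarrow> int)
    \<Rightarrow> (nat \<Rightarrow> nat \<Rightarrow> int) \<Rightarrow> (nat \<Rightarrow> int) \<Rightarrow> complex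
    \<Rightarrow> ((nat \<Rightarrow> int) \<Rightarrow> complex) \<Rightarrow> ((nat \<Rightarrow> int) \<Rightarrow> complex)" where
  "qt_monomial_map N e M e' V lam q f = (\<lambda>d. \<Sum>a\<in>{a. f a \<noteq> 0}.
     if qt_exp_map N V a = d then q powi qt_twist_exp N e M e' V lam a * f a else 0)"

lemma qt_twist_exp_cocycle:
  assumes "\<And>i j. e i j = - e j i" and "\<And>i j. e' i j = - e' j i"
    and "\<And>i j. i < N \<Longrightarrow> j < N \<Longrightarrow> qt_form M e' (V i) (V j) = e i j"
  shows "qt_twist_exp N e M e' V lam (\<lambda>k. b k + c k) + qt_coc N e b c
     = qt_twist_exp N e M e' V lam b + qt_twist_exp N e M e' V lam c
       + qt_coc M e' (qt_exp_map N V b) (qt_exp_map N V c)"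
proof -
  have "(\<Sum>i<N. (b i + c i) * lam i) = (\<Sum>i<N. b i * lam i) + (\<Sum>i<N. c i * lam i)"
    by (simp add: algebra_simps sum.distrib)
  then show ?thesis
    unfolding qt_twist_exp_def qt_exp_map_add
    using qt_weyl_exp_add[where N=N and e=e and x=b and y=c, OF assms(1)]
      qt_weyl_exp_add[where N=M and e=e' and x="qt_exp_map N V b" and y="qt_exp_map N V c", OF assms(2)]
      qt_form_exp_map[where N=N and M=M and e=e and e'=e' and V=V and b=b and c=c, OF assms(3)]
    by linarith
qed

lemma qt_monomial_map_eq_sum:
  assumes "finite S" "{a. f a \<noteq> 0} \<subseteq> S"
  shows "qt_monomial_map N e M e' V lam q f d = (\<Sum>a\<in>S.
    if qt_exp_map N V a = d then q powi qt_twist_exp N e M e' V lam a * f a else 0)"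
  unfolding qt_monomial_map_def by (rule sum.mono_neutral_left) (use assms in auto)

lemma qt_monomial_map_support:
  "{d. qt_monomial_map N e M e' V lam q f d \<noteq> 0} \<subseteq> qt_exp_map N V ` {a. f a \<noteq> 0}"
proof
  fix d assume "d \<in> {d. qt_monomial_map N e M e' V lam q f d \<noteq> 0}"
  then obtain a where "f a \<noteq> 0"
    "(if qt_exp_map N V a = d then q powi qt_twist_exp N e M e' V lam a * f a else 0) \<noteq> 0"
    unfolding qt_monomial_map_def using sum.not_neutral_contains_not_neutral by force
  then show "d \<in> qt_exp_map N V ` {a. f a \<noteq> 0}" by (auto split: if_splits)
qed

lemma qt_mult_eq_sum:
  assumes "finite S" "{a. f a \<noteq> 0} \<subseteq> S" "finite T" "{a. g a \<noteq> 0} \<subseteq> T"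
  shows "qt_mult N e q f g a = (\<Sum>b\<in>S. \<Sum>c\<in>T.
    if (\<lambda>k. b k + c k) = a then q powi qt_coc N e b c * f b * g c else 0)"
proof -
  have "(\<Sum>b\<in>S. \<Sum>c\<in>T. if (\<lambda>k. b k + c k) = a then q powi qt_coc N e b c * f b * g c else 0)
     = (\<Sum>(b,c)\<in>S \<times> T. if (\<lambda>k. b k + c k) = a then q powi qt_coc N e b c * f b * g c else 0)"
    by (rule sum.cartesian_product)
  also have "\<dots> = (\<Sum>(b, c) \<in> {(b, c). f b \<noteq> 0 \<and> g c \<noteq> 0 \<and> (\<lambda>k. b k + c k) = a}.
      q powi (qt_coc N e b c) * f b * g c)"
    by (rule sum.mono_neutral_cong_right) (use assms in \<open>auto split: if_splits\<close>)
  finally show ?thesis unfolding qt_mult_def by simp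
qed

lemma qt_monomial_map_mult_eq_sum:
  assumes "finite {a. f a \<noteq> 0}" and "finite {a. g a \<noteq> 0}"
  shows "qt_monomial_map N e M e' V lam q (qt_mult N e q f g) d
    = (\<Sum>b\<in>{a. f a \<noteq> 0}. \<Sum>c\<in>{a. g a \<noteq> 0}.
         if qt_exp_map N V (\<lambda>k. b k + c k) = d
         then q powi qt_twist_exp N e M e' V lam (\<lambda>k. b k + c k) * q powi qt_coc N e b c * f b * g c
         else 0)"
    (is "_ = (\<Sum>b\<in>?Sf. \<Sum>c\<in>?Sg. ?W b c)")
proof -
  let ?U = "(\<lambda>(b, c). (\<lambda>k. b k + c k :: int)) ` (?Sf \<times> ?Sg)"
  let ?L = "qt_exp_map N V" and ?G = "qt_twist_exp N e M e' V lam"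
  have fin_U: "finite ?U" using assms by simp
  have prod: "qt_mult N e q f g a = (\<Sum>b\<in>?Sf. \<Sum>c\<in>?Sg.
      if (\<lambda>k. b k + c k) = a then q powi qt_coc N e b c * f b * g c else 0)" for a
    by (rule qt_mult_eq_sum) (use assms in auto)
  have "{a. qt_mult N e q f g a \<noteq> 0} \<subseteq> ?U"
  proof
    fix a assume "a \<in> {a. qt_mult N e q f g a \<noteq> 0}"
    then obtain b where "b \<in> ?Sf" and
      "(\<Sum>c\<in>?Sg. if (\<lambda>k. b k + c k) = a then q powi qt_coc N e b c * f b * g c else 0) \<noteq> 0"
      unfolding prod using sum.not_neutral_contains_not_neutral by force
    moreover from this(2) obtain c where "c \<in> ?Sg" and
      "(if (\<lambda>k. b k + c k) = a then q powi qt_coc N e b c * f b * g c else 0) \<noteq> 0"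
      using sum.not_neutral_contains_not_neutral by force
    ultimately show "a \<in> ?U" by (auto split: if_splits)
  qed
  then have "qt_monomial_map N e M e' V lam q (qt_mult N e q f g) d
      = (\<Sum>a\<in>?U. if ?L a = d then q powi ?G a * qt_mult N e q f g a else 0)"
    by (rule qt_monomial_map_eq_sum[OF fin_U])
  also have "\<dots> = (\<Sum>a\<in>?U. \<Sum>b\<in>?Sf. \<Sum>c\<in>?Sg. if (\<lambda>k. b k + c k) = a then ?W b c else 0)"
  proof (rule sum.cong[OF refl])
    fix a
    show "(if ?L a = d then q powi ?G a * qt_mult N e q f g a else 0)
      = (\<Sum>b\<in>?Sf. \<Sum>c\<in>?Sg. if (\<lambda>k. b k + c k) = a then ?W b c else 0)"
      by (cases "?L a = d") (auto simp: prod sum_distrib_left cong: if_cong intro!: sum.cong)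
  qed
  also have "\<dots> = (\<Sum>b\<in>?Sf. \<Sum>c\<in>?Sg. \<Sum>a\<in>?U. if (\<lambda>k. b k + c k) = a then ?W b c else 0)"
    by (subst sum.swap, rule sum.cong[OF refl], rule sum.swap)
  also have "\<dots> = (\<Sum>b\<in>?Sf. \<Sum>c\<in>?Sg. ?W b c)"
    by (intro sum.cong refl) (use fin_U in auto)
  finally show ?thesis .
qed

lemma sum_sum_collapse:
  assumes "finite A" "finite B" "u \<in> A" "v \<in> B"
  shows "(\<Sum>x\<in>A. \<Sum>y\<in>B. if u = x then if v = y then Z x y else 0 else 0)
    = (Z u v :: 'a::comm_monoid_add)"
proof -
  have "(\<Sum>y\<in>B. if u = x then if v = y then Z x y else 0 else 0) = (if u = x then Z x v else 0)"
    for x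
    using assms by auto
  then show ?thesis using assms by simp
qed

lemma qt_mult_monomial_map_eq_sum:
  assumes "finite {a. f a \<noteq> 0}" and "finite {a. g a \<noteq> 0}"
  shows "qt_mult M e' q (qt_monomial_map N e M e' V lam q f) (qt_monomial_map N e M e' V lam q g) d
    = (\<Sum>b\<in>{a. f a \<noteq> 0}. \<Sum>c\<in>{a. g a \<noteq> 0}.
         if (\<lambda>k. qt_exp_map N V b k + qt_exp_map N V c k) = d
         then q powi qt_coc M e' (qt_exp_map N V b) (qt_exp_map N V c)
           * (q powi qt_twist_exp N e M e' V lam b * f b)
           * (q powi qt_twist_exp N e M e' V lam c * g c)
         else 0)"
proof -
  let ?F = "qt_monomial_map N e M e' V lam q" and ?G = "qt_twist_exp N e M e' V lam"
  let ?L = "qt_exp_map N V" and ?Sf = "{a. f a \<noteq> 0}" and ?Sg = "{a. g a \<noteq> 0}"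
  define Z where "Z b' c' b c = (if (\<lambda>k. b' k + c' k) = d
    then q powi qt_coc M e' b' c' * (q powi ?G b * f b) * (q powi ?G c * g c) else 0)" for b' c' b c
  have image_f: "?F f b' = (\<Sum>b\<in>?Sf. if ?L b = b' then q powi ?G b * f b else 0)" for b'
    by (simp add: qt_monomial_map_def)
  have image_g: "?F g c' = (\<Sum>c\<in>?Sg. if ?L c = c' then q powi ?G c * g c else 0)" for c'
    by (simp add: qt_monomial_map_def)
  have "qt_mult M e' q (?F f) (?F g) d = (\<Sum>b'\<in>?L ` ?Sf. \<Sum>c'\<in>?L ` ?Sg.
      if (\<lambda>k. b' k + c' k) = d then q powi qt_coc M e' b' c' * ?F f b' * ?F g c' else 0)"
    by (rule qt_mult_eq_sum) (use assms qt_monomial_map_support in auto)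
  also have "\<dots> = (\<Sum>b'\<in>?L ` ?Sf. \<Sum>c'\<in>?L ` ?Sg. \<Sum>b\<in>?Sf. \<Sum>c\<in>?Sg.
      if ?L b = b' then if ?L c = c' then Z b' c' b c else 0 else 0)"
  proof (intro sum.cong refl)
    fix b' c'
    show "(if (\<lambda>k. b' k + c' k) = d then q powi qt_coc M e' b' c' * ?F f b' * ?F g c' else 0)
      = (\<Sum>b\<in>?Sf. \<Sum>c\<in>?Sg. if ?L b = b' then if ?L c = c' then Z b' c' b c else 0 else 0)"
      unfolding image_f image_g mult_sum_sum Z_def
      by (cases "(\<lambda>k. b' k + c' k) = d") (auto intro!: sum.cong sum.neutral)
  qed
  also have "\<dots> = (\<Sum>b\<in>?Sf. \<Sum>c\<in>?Sg. \<Sum>b'\<in>?L ` ?Sf. \<Sum>c'\<in>?L ` ?Sg.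
      if ?L b = b' then if ?L c = c' then Z b' c' b c else 0 else 0)"
    by (rule sum_swap_pairs)
  also have "\<dots> = (\<Sum>b\<in>?Sf. \<Sum>c\<in>?Sg. Z (?L b) (?L c) b c)"
    by (intro sum.cong refl sum_sum_collapse) (use assms in auto)
  finally show ?thesis unfolding Z_def .
qed

lemma qt_monomial_map_mult:
  assumes "q \<noteq> 0" and "\<And>i j. e i j = - e j i" and "\<And>i j. e' i j = - e' j i"
    and "\<And>i j. i < N \<Longrightarrow> j < N \<Longrightarrow> qt_form M e' (V i) (V j) = e i j"
    and "finite {a. f a \<noteq> 0}" and "finite {a. g a \<noteq> 0}"
  shows "qt_monomial_map N e M e' V lam q (qt_mult N e q f g)
    = qt_mult M e' q (qt_monomial_map N e M e' V lam q f) (qt_monomial_map N e M e' V lam q g)"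
proof
  fix d
  let ?L = "qt_exp_map N V" and ?G = "qt_twist_exp N e M e' V lam"
  have powers: "q powi ?G (\<lambda>k. b k + c k) * q powi qt_coc N e b c
      = q powi qt_coc M e' (?L b) (?L c) * q powi ?G b * q powi ?G c" for b c
  proof -
    have "q powi ?G (\<lambda>k. b k + c k) * q powi qt_coc N e b c
        = q powi (?G (\<lambda>k. b k + c k) + qt_coc N e b c)"
      by (simp add: power_int_add assms(1))
    also have "\<dots> = q powi (qt_coc M e' (?L b) (?L c) + ?G b + ?G c)"
      using qt_twist_exp_cocycle[where lam=lam and b=b and c=c, OF assms(2-4)]
      by (simp add: algebra_simps)
    also have "\<dots> = q powi qt_coc M e' (?L b) (?L c) * q powi ?G b * q powi ?G c"
      by (simp add: power_int_add assms(1))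
    finally show ?thesis .
  qed
  show "qt_monomial_map N e M e' V lam q (qt_mult N e q f g) d
      = qt_mult M e' q (qt_monomial_map N e M e' V lam q f) (qt_monomial_map N e M e' V lam q g) d"
    unfolding qt_monomial_map_mult_eq_sum[OF assms(5,6)] qt_mult_monomial_map_eq_sum[OF assms(5,6)]
      powers qt_exp_map_add
    by (intro sum.cong refl) (simp add: mult.assoc)
qed

lemma qt_monomial_map_add:
  assumes "finite {a. f a \<noteq> 0}" and "finite {a. g a \<noteq> 0}"
  shows "qt_monomial_map N e M e' V lam q (\<lambda>a. f a + g a)
    = (\<lambda>d. qt_monomial_map N e M e' V lam q f d + qt_monomial_map N e M e' V lam q g d)"
proof
  fix d
  let ?S = "{a. f a \<noteq> 0} \<union> {a. g a \<noteq> 0}"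
  have fin: "finite ?S" using assms by simp
  show "qt_monomial_map N e M e' V lam q (\<lambda>a. f a + g a) d
      = qt_monomial_map N e M e' V lam q f d + qt_monomial_map N e M e' V lam q g d"
    by (subst (1 2 3) qt_monomial_map_eq_sum[OF fin])
       (auto simp: sum.distrib[symmetric] algebra_simps intro!: sum.cong)
qed

lemma qt_monomial_map_smult:
  assumes "finite {a. f a \<noteq> 0}"
  shows "qt_monomial_map N e M e' V lam q (qt_smult c f)
    = qt_smult c (qt_monomial_map N e M e' V lam q f)"
proof
  fix d
  have "qt_monomial_map N e M e' V lam q (qt_smult c f) d = (\<Sum>a\<in>{a. f a \<noteq> 0}.
      if qt_exp_map N V a = d then q powi qt_twist_exp N e M e' V lam a * qt_smult c f a else 0)"
    by (rule qt_monomial_map_eq_sum[OF assms]) (auto simp: qt_smult_def)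
  then show "qt_monomial_map N e M e' V lam q (qt_smult c f) d
      = qt_smult c (qt_monomial_map N e M e' V lam q f) d"
    by (simp add: qt_smult_def qt_monomial_map_def sum_distrib_left algebra_simps if_distrib
        cong: if_cong)
qed

lemma qt_monomial_map_mono:
  "qt_monomial_map N e M e' V lam q (qt_mono a)
    = qt_smult (q powi qt_twist_exp N e M e' V lam a) (qt_mono (qt_exp_map N V a))"
proof -
  have "{b. qt_mono a b \<noteq> 0} = {a}" by (auto simp: qt_mono_def)
  then show ?thesis
    by (auto simp: qt_monomial_map_def qt_smult_def qt_mono_def)
qed

lemma qt_monomial_map_one:
  "qt_monomial_map N e M e' V lam q (qt_mono (\<lambda>_. 0)) = qt_mono (\<lambda>_. 0)"
proof -
  have zero: "qt_exp_map N V (\<lambda>_. 0) = (\<lambda>_. 0)" by (simp add: qt_exp_map_def)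
  have "qt_twist_exp N e M e' V lam (\<lambda>_. 0) = 0"
    by (simp add: qt_twist_exp_def zero qt_weyl_exp_def)
  then show ?thesis unfolding qt_monomial_map_mono zero by (simp add: qt_smult_def)
qed

lemma qt_monomial_map_carrier:
  assumes "f \<in> qt_carrier N" and "\<And>i k. i < N \<Longrightarrow> M \<le> k \<Longrightarrow> V i k = 0"
  shows "qt_monomial_map N e M e' V lam q f \<in> qt_carrier M"
proof -
  let ?supp = "{d. qt_monomial_map N e M e' V lam q f d \<noteq> 0}"
  have "finite {a. f a \<noteq> 0}" using assms(1) by (simp add: qt_carrier_def)
  then have "finite ?supp"
    by (rule finite_subset[OF qt_monomial_map_support finite_imageI])
  moreover have "\<forall>k\<ge>M. d k = 0" if "d \<in> ?supp" for d
  proof -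
    obtain a where "f a \<noteq> 0" "d = qt_exp_map N V a"
      using qt_monomial_map_support \<open>d \<in> ?supp\<close> by blast
    then show ?thesis using assms by (simp add: qt_exp_map_def qt_carrier_def)
  qed
  ultimately show ?thesis by (auto simp: qt_carrier_def)
qed

theorem qt_monomial_map_alg_hom:
  assumes "q \<noteq> 0" and "\<And>i j. e i j = - e j i" and "\<And>i j. e' i j = - e' j i"
    and "\<And>i j. i < N \<Longrightarrow> j < N \<Longrightarrow> qt_form M e' (V i) (V j) = e i j"
    and "\<And>i k. i < N \<Longrightarrow> M \<le> k \<Longrightarrow> V i k = 0"
  shows "qt_monomial_map N e M e' V lam q \<in> alg_hom (qtorus N e q) (qtorus M e' q)"
proof -
  let ?F = "qt_monomial_map N e M e' V lam q"
  have fin: "finite {a. f a \<noteq> 0}" if "f \<in> carrier (qtorus N e q)" for f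
    using that by (simp add: qtorus_def qt_carrier_def)
  have "?F \<in> ring_hom (qtorus N e q) (qtorus M e' q)"
  proof (rule ring_hom_memI)
    fix x assume "x \<in> carrier (qtorus N e q)"
    then show "?F x \<in> carrier (qtorus M e' q)"
      by (simp add: qtorus_def qt_monomial_map_carrier[OF _ assms(5)])
  next
    fix x y assume "x \<in> carrier (qtorus N e q)" "y \<in> carrier (qtorus N e q)"
    note fin_xy = fin[OF this(1)] fin[OF this(2)]
    show "?F (x \<otimes>\<^bsub>qtorus N e q\<^esub> y) = ?F x \<otimes>\<^bsub>qtorus M e' q\<^esub> ?F y"
      by (simp add: qtorus_def qt_monomial_map_mult[OF assms(1-4) fin_xy])
    show "?F (x \<oplus>\<^bsub>qtorus N e q\<^esub> y) = ?F x \<oplus>\<^bsub>qtorus M e' q\<^esub> ?F y"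
      by (simp add: qtorus_def qt_monomial_map_add[OF fin_xy])
  next
    show "?F \<one>\<^bsub>qtorus N e q\<^esub> = \<one>\<^bsub>qtorus M e' q\<^esub>"
      by (simp add: qtorus_def qt_monomial_map_one)
  qed
  then show ?thesis
    unfolding alg_hom_def using qt_monomial_map_smult[OF fin] by blast
qed

lemma qt_monomial_map_gen:
  assumes "i < N"
  shows "qt_monomial_map N e M e' V lam q (qt_gen i 1)
    = qt_smult (q powi (qt_weyl_exp M e' (V i) + lam i)) (qt_mono (V i))"
proof -
  define unit where "unit = (\<lambda>j. if j = i then 1 else (0::int))"
  have "qt_exp_map N V unit = V i"
  proof
    fix k
    have "(\<Sum>j<N. unit j * V j k) = (\<Sum>j<N. if j = i then V j k else 0)"
      by (intro sum.cong) (auto simp: unit_def)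
    then show "qt_exp_map N V unit k = V i k" using assms by (simp add: qt_exp_map_def)
  qed
  moreover have "qt_weyl_exp N e unit = 0"
    unfolding qt_weyl_exp_def unit_def by (intro sum.neutral ballI) auto
  moreover have "(\<Sum>j<N. unit j * lam j) = (\<Sum>j<N. if j = i then lam j else 0)"
    by (intro sum.cong) (auto simp: unit_def)
  ultimately show ?thesis
    using assms by (simp add: qt_gen_def flip: unit_def add: qt_monomial_map_mono qt_twist_exp_def)
qed

lemma qt_mono_mult:
  "qt_mult N e q (qt_mono a) (qt_mono b) = qt_smult (q powi qt_coc N e a b) (qt_mono (\<lambda>k. a k + b k))"
proof
  fix d
  have "{(b', c'). qt_mono a b' \<noteq> 0 \<and> qt_mono b c' \<noteq> 0 \<and> (\<lambda>k. b' k + c' k) = d}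
      = (if (\<lambda>k. a k + b k) = d then {(a, b)} else {})"
    by (auto simp: qt_mono_def)
  then show "qt_mult N e q (qt_mono a) (qt_mono b) d
      = qt_smult (q powi qt_coc N e a b) (qt_mono (\<lambda>k. a k + b k)) d"
    unfolding qt_mult_def by (auto simp: qt_smult_def qt_mono_def)
qed

definition kashaev_H_exp :: "nat \<Rightarrow> nat \<Rightarrow> nat \<Rightarrow> int" where
  "kashaev_H_exp mu s = (\<lambda>k.
     if s = 0 then (if k = 2*mu then 1 else if k = 2*mu+1 then -1 else 0)
     else if s = 1 then (if k = 2*mu+1 then 1 else 0)
     else (if k = 2*mu then -1 else 0))"

lemma Hg_eq_qt_mono:
  assumes "s < 3"
  shows "Hg m q s mu = qt_mono (kashaev_H_exp mu s)"
proof -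
  consider "s = 0" | "s = 1" | "s = 2" using assms by linarith
  then show ?thesis
  proof cases
    case 1
    have "qt_coc (4*m) kashaev_eps (\<lambda>j. if j = 2*mu then 1 else 0) (\<lambda>j. if j = 2*mu+1 then -1 else 0) = 0"
      unfolding qt_coc_def by (intro sum.neutral ballI) auto
    moreover have "(\<lambda>k. (if k = 2*mu then 1 else 0) + (if k = 2*mu+1 then -1 else 0)) = kashaev_H_exp mu 0"
      by (auto simp: kashaev_H_exp_def)
    ultimately show ?thesis using 1
      by (simp add: Hg_def kashaev_def qtorus_def Yg_def Zg_def qt_gen_def qt_mono_mult qt_smult_def)
  qed (simp_all add: Hg_def Yg_def Zg_def qt_gen_def kashaev_H_exp_def)
qed

lemma sum_lessThan_two_terms:
  assumes "Suc a < (M::nat)" and "\<And>k. k \<noteq> a \<Longrightarrow> k \<noteq> Suc a \<Longrightarrow> f k = 0"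
  shows "(\<Sum>k<M. f k) = f a + f (Suc a)"
proof -
  have "(\<Sum>k<M. f k) = (\<Sum>k\<in>{a, Suc a}. f k)"
    by (rule sum.mono_neutral_right) (use assms in auto)
  then show ?thesis by simp
qed

lemma kashaev_form_H_exp:
  assumes "mu < 2*m" "nu < 2*m" "s < 3" "t < 3"
  shows "qt_form (4*m) kashaev_eps (kashaev_H_exp mu s) (kashaev_H_exp nu t)
    = (if mu = nu then sig s t else 0)"
proof -
  let ?h = kashaev_H_exp
  have inner: "(\<Sum>l<4*m. kashaev_eps k l * x * ?h nu t l) =
      kashaev_eps k (2*nu) * x * ?h nu t (2*nu)
      + kashaev_eps k (Suc (2*nu)) * x * ?h nu t (Suc (2*nu))" for k x
    by (rule sum_lessThan_two_terms) (use assms in \<open>auto simp: kashaev_H_exp_def\<close>)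
  have "qt_form (4*m) kashaev_eps (?h mu s) (?h nu t) =
      (\<Sum>l<4*m. kashaev_eps (2*mu) l * ?h mu s (2*mu) * ?h nu t l)
      + (\<Sum>l<4*m. kashaev_eps (Suc (2*mu)) l * ?h mu s (Suc (2*mu)) * ?h nu t l)"
    unfolding qt_form_def
    by (rule sum_lessThan_two_terms) (use assms in \<open>auto simp: kashaev_H_exp_def\<close>)
  also have "\<dots> = (if mu = nu then sig s t else 0)"
    unfolding inner using assms
    by (cases "mu = nu"; cases s; cases t)
       (auto simp: kashaev_H_exp_def kashaev_eps_def sig_def numeral_3_eq_3 less_Suc_eq)
  finally show ?thesis .
qed

definition edge_sides :: "nat \<Rightarrow> (nat \<Rightarrow> nat \<Rightarrow> nat) \<Rightarrow> nat \<Rightarrow> (nat \<times> nat) set" where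
  "edge_sides m side i = {(mu, s). mu < 2*m \<and> s < 3 \<and> side mu s = i}"

definition edge_exp :: "nat \<Rightarrow> (nat \<Rightarrow> nat \<Rightarrow> nat) \<Rightarrow> nat \<Rightarrow> nat \<Rightarrow> int" where
  "edge_exp m side i = (\<lambda>k. \<Sum>(mu, s)\<in>edge_sides m side i. kashaev_H_exp mu s k)"

text \<open>Cancels the Weyl normalisations of the two factors of \<open>H^s_\<mu> H^t_\<nu>\<close>.\<close>
definition edge_twist :: "nat \<Rightarrow> (nat \<Rightarrow> nat \<Rightarrow> nat) \<Rightarrow> nat \<Rightarrow> int" where
  "edge_twist m side i =
     - (\<Sum>(mu, s)\<in>edge_sides m side i. qt_weyl_exp (4*m) kashaev_eps (kashaev_H_exp mu s))"

lemma sum_pairs_lessThan: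
  fixes A B :: nat
  shows "(\<Sum>p\<in>{(mu, s). mu < A \<and> s < B \<and> Q mu s}. f p)
    = (\<Sum>mu<A. \<Sum>s<B. if Q mu s then f (mu, s) else (0::'a::comm_monoid_add))"
proof -
  have "(\<Sum>mu<A. \<Sum>s<B. if Q mu s then f (mu, s) else 0)
      = (\<Sum>(mu, s)\<in>{..<A} \<times> {..<B}. if Q mu s then f (mu, s) else 0)"
    by (rule sum.cartesian_product)
  also have "\<dots> = (\<Sum>p\<in>{..<A} \<times> {..<B}. if Q (fst p) (snd p) then f p else 0)"
    by (simp add: split_def cong: if_cong)
  also have "\<dots> = (\<Sum>p\<in>{p \<in> {..<A} \<times> {..<B}. Q (fst p) (snd p)}. f p)"
    by (rule sum.inter_filter[symmetric]) simp
  also have "{p \<in> {..<A} \<times> {..<B}. Q (fst p) (snd p)} = {(mu, s). mu < A \<and> s < B \<and> Q mu s}"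
    by auto
  finally show ?thesis ..
qed

lemma card_pairs_lessThan:
  fixes A B :: nat
  shows "int (card {(mu, s). mu < A \<and> s < B \<and> Q mu s}) = (\<Sum>mu<A. \<Sum>s<B. if Q mu s then 1 else 0)"
  unfolding card_eq_sum of_nat_sum sum_pairs_lessThan by (simp add: of_nat_sum if_distrib cong: if_cong)

lemma sum_lessThan_3: "(\<Sum>s<(3::nat). f s) = f 0 + f 1 + (f 2 :: 'a::comm_monoid_add)"
proof -
  have "{..<3::nat} = {0, 1, 2}" by auto
  then show ?thesis by (simp add: algebra_simps)
qed

lemma sigma_lambda_eq_sum_sig:
  "sigma_lambda m side i j
    = (\<Sum>mu<2*m. \<Sum>s<3. \<Sum>t<3. if side mu s = i \<and> side mu t = j then sig s t else 0)"
proof -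
  have "sigma_lambda m side i j
      = (\<Sum>mu<2*m. (\<Sum>s<3. if side mu ((s+1) mod 3) = i \<and> side mu s = j then 1 else 0)
                 - (\<Sum>s<3. if side mu ((s+1) mod 3) = j \<and> side mu s = i then 1 else 0))"
    unfolding sigma_lambda_def corner_count_def card_pairs_lessThan sum_subtractf ..
  also have "\<dots> = (\<Sum>mu<2*m. \<Sum>s<3. \<Sum>t<3. if side mu s = i \<and> side mu t = j then sig s t else 0)"
  proof (rule sum.cong[OF refl])
    fix mu
    have "sig 0 0 = 0" "sig 0 1 = -1" "sig 0 2 = 1" "sig 1 0 = 1" "sig 1 1 = 0" "sig 1 2 = -1"
      "sig 2 0 = -1" "sig 2 1 = 1" "sig 2 2 = 0"
      by (simp_all add: sig_def)
    then show "(\<Sum>s<3. if side mu ((s+1) mod 3) = i \<and> side mu s = j then 1 else 0)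
        - (\<Sum>s<3. if side mu ((s+1) mod 3) = j \<and> side mu s = i then 1 else 0)
      = (\<Sum>s<3. \<Sum>t<3. if side mu s = i \<and> side mu t = j then sig s t else (0::int))"
      unfolding sum_lessThan_3
      by (cases "side mu 0 = i"; cases "side mu 1 = i"; cases "side mu 2 = i";
          cases "side mu 0 = j"; cases "side mu 1 = j"; cases "side mu 2 = j")
         (simp_all add: numeral_2_eq_2)
  qed
  finally show ?thesis .
qed

lemma kashaev_form_edge_exp:
  "qt_form (4*m) kashaev_eps (edge_exp m side i) (edge_exp m side j) = sigma_lambda m side i j"
proof -
  let ?P = "edge_sides m side"
  have "qt_form (4*m) kashaev_eps (edge_exp m side i) (edge_exp m side j)
      = (\<Sum>(mu, s)\<in>?P i. \<Sum>(nu, t)\<in>?P j.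
           qt_form (4*m) kashaev_eps (kashaev_H_exp mu s) (kashaev_H_exp nu t))"
    unfolding edge_exp_def split_def by (rule qt_form_sum)
  also have "\<dots> = (\<Sum>(mu, s)\<in>?P i. \<Sum>(nu, t)\<in>?P j. if mu = nu then sig s t else 0)"
    by (auto simp: edge_sides_def kashaev_form_H_exp intro!: sum.cong)
  also have "\<dots> = (\<Sum>mu<2*m. \<Sum>s<3. if side mu s = i then
      (\<Sum>nu<2*m. \<Sum>t<3. if side nu t = j then (if mu = nu then sig s t else 0) else 0) else 0)"
    unfolding edge_sides_def sum_pairs_lessThan by (simp only: prod.case)
  also have "\<dots> = (\<Sum>mu<2*m. \<Sum>s<3. \<Sum>t<3. if side mu s = i \<and> side mu t = j then sig s t else 0)"
  proof (intro sum.cong refl)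
    fix mu s assume "mu \<in> {..<2*m}"
    then have "(\<Sum>nu<2*m. \<Sum>t<3. if side nu t = j then (if mu = nu then sig s t else 0) else 0)
        = (\<Sum>nu<2*m. if mu = nu then (\<Sum>t<3. if side mu t = j then sig s t else 0) else 0)"
      by (intro sum.cong refl) (auto cong: if_cong)
    also have "\<dots> = (\<Sum>t<3. if side mu t = j then sig s t else 0)"
      using \<open>mu \<in> {..<2*m}\<close> by simp
    finally show "(if side mu s = i then
        (\<Sum>nu<2*m. \<Sum>t<3. if side nu t = j then (if mu = nu then sig s t else 0) else 0) else 0)
      = (\<Sum>t<3. if side mu s = i \<and> side mu t = j then sig s t else 0)"
      by auto
  qed
  finally show ?thesis by (simp add: sigma_lambda_eq_sum_sig)
qed

definition fock_kashaev_map :: "nat \<Rightarrow> (nat \<Rightarrow> nat \<Rightarrow> nat) \<Rightarrow> complex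
    \<Rightarrow> ((nat \<Rightarrow> int) \<Rightarrow> complex) \<Rightarrow> ((nat \<Rightarrow> int) \<Rightarrow> complex)" where
  "fock_kashaev_map m side q = qt_monomial_map (3*m) (sigma_lambda m side) (4*m) kashaev_eps
     (edge_exp m side) (edge_twist m side) q"

lemma fock_kashaev_map_alg_hom:
  assumes "q \<noteq> 0"
  shows "fock_kashaev_map m side q \<in> alg_hom (chekhov_fock m side q) (kashaev m q)"
  unfolding fock_kashaev_map_def chekhov_fock_def kashaev_def
proof (rule qt_monomial_map_alg_hom[OF assms])
  show "sigma_lambda m side i j = - sigma_lambda m side j i" for i j
    by (simp add: sigma_lambda_def)
  show "kashaev_eps i j = - kashaev_eps j i" for i j
    by (auto simp: kashaev_eps_def)
  show "qt_form (4*m) kashaev_eps (edge_exp m side i) (edge_exp m side j) = sigma_lambda m side i j"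
    for i j
    by (rule kashaev_form_edge_exp)
  show "edge_exp m side i k = 0" if "4*m \<le> k" for i k
    unfolding edge_exp_def
    by (intro sum.neutral ballI) (use that in \<open>auto simp: edge_sides_def kashaev_H_exp_def\<close>)
qed

lemma fock_kashaev_map_gen:
  assumes "q \<noteq> 0" and "card (edge_sides m side i) = 2" and "i < 3*m"
    and "mu < 2*m" "nu < 2*m" "s < 3" "t < 3"
    and "(mu, s) \<noteq> (nu, t)" "side mu s = i" "side nu t = i"
  shows "fock_kashaev_map m side q (qt_gen i 1)
    = qt_smult (q powi (if mu = nu then sig t s else 0)) (Hg m q s mu \<otimes>\<^bsub>kashaev m q\<^esub> Hg m q t nu)"
proof -
  let ?hs = "kashaev_H_exp mu s" and ?ht = "kashaev_H_exp nu t"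
  let ?w = "qt_weyl_exp (4*m) kashaev_eps" and ?coc = "qt_coc (4*m) kashaev_eps ?hs ?ht"
  have "finite (edge_sides m side i)"
    using assms(2) card.infinite by fastforce
  moreover have "{(mu, s), (nu, t)} \<subseteq> edge_sides m side i"
    using assms(4-10) by (auto simp: edge_sides_def)
  ultimately have sides: "edge_sides m side i = {(mu, s), (nu, t)}"
    using assms(2,8) card_seteq[of "edge_sides m side i" "{(mu, s), (nu, t)}"] by simp
  have "?w (edge_exp m side i) + edge_twist m side i = ?w (\<lambda>k. ?hs k + ?ht k) - ?w ?hs - ?w ?ht"
    using assms(8) by (simp add: edge_exp_def edge_twist_def sides)
  also have "\<dots> = (if mu = nu then sig t s else 0) + ?coc"
    using qt_weyl_exp_add[where N="4*m" and e=kashaev_eps and x="?hs" and y="?ht"]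
      kashaev_form_H_exp[OF assms(4-7)]
    by (auto simp: kashaev_eps_def sig_def)
  finally have "fock_kashaev_map m side q (qt_gen i 1)
      = qt_smult (q powi ((if mu = nu then sig t s else 0) + ?coc)) (qt_mono (\<lambda>k. ?hs k + ?ht k))"
    using assms(8) by (simp add: fock_kashaev_map_def qt_monomial_map_gen[OF assms(3)] edge_exp_def sides)
  then show ?thesis
    using assms(1) by (simp add: Hg_eq_qt_mono assms(6,7) kashaev_def qtorus_def qt_mono_mult
        qt_smult_def power_int_add mult.assoc)
qed

theorem lemma5p2:
  fixes m :: nat and side :: "nat \<Rightarrow> nat \<Rightarrow> nat" and q :: complex
  assumes "q \<noteq> 0"
    and "decorated_ideal_triangulation m side"
  shows "\<exists>F. F \<in> alg_hom (chekhov_fock m side q) (kashaev m q) \<and>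
    (\<forall>i<3*m. \<forall>mu<2*m. \<forall>nu<2*m. \<forall>s<3. \<forall>t<3.
       (mu, s) \<noteq> (nu, t) \<and> side mu s = i \<and> side nu t = i \<longrightarrow>
       F (qt_gen i 1) =
         qt_smult (q powi (if mu = nu then sig t s else 0))
           (Hg m q s mu \<otimes>\<^bsub>kashaev m q\<^esub> Hg m q t nu))"
proof -
  have "card (edge_sides m side i) = 2" if "i < 3*m" for i
    using assms(2) that unfolding decorated_ideal_triangulation_def edge_sides_def by blast
  then show ?thesis
    using fock_kashaev_map_alg_hom[OF assms(1)] fock_kashaev_map_gen[OF assms(1)] by blast
qed

end
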